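(* Let $h,m$ be positive integers with $h=1$ or $\omega(m)=1$, and let $c$ be a positive integer such that no $\mathrm{CC}^h[m]$-circuit computes the $n$-ary conjunction $\mathrm{AND}_n$ for any $n>c$. Then every non-constant Boolean function computable by a $\mathrm{CC}^h[m]$-circuit has balance at least $2^{1-c}$.
   Context: For an integer $m\ge 1$ and $A\subseteq\{0,\dots,m-1\}$, a gate $\mathrm{MOD}_m^A$ takes finitely many Boolean inputs (counted with multiplicity) and outputs $1$ if their sum modulo $m$ lies in $A$, and $0$ otherwise. A $\mathrm{CC}^h[m]$-circuit is a depth-$h$ Boolean circuit all of whose gates are of the form $\mathrm{MOD}_m^A$ ($A$ may vary between gates), with Boolean variable inputs (constants allowed) and multiple wires allowed. $\omega(m)$ is the number of distinct prime divisors of $m$. The balance of an $n$-ary Boolean function $f$ is $\mathrm{bal}(f)=1-\frac{\big||f^{-1}(0)|-|f^{-1}(1)|\big|}{2^n}$. *)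

theory Defs
  imports Complex_Main "HOL-Computational_Algebra.Primes"
begin

text \<open>A gate carries its accepting set A and the list of
  its input wires (sub-circuits; repeated entries model multiple wires).\<close>

datatype circ = Var nat | Cst bool | Gate "nat set" "circ list"

fun depth :: "circ \<Rightarrow> nat" where
  "depth (Var i) = 0"
| "depth (Cst b) = 0"
| "depth (Gate A cs) = Suc (foldr max (map depth cs) 0)"

fun eval :: "nat \<Rightarrow> circ \<Rightarrow> bool list \<Rightarrow> bool" where
  "eval m (Var i) xs = xs ! i"
| "eval m (Cst b) xs = b"
| "eval m (Gate A cs) xs = ((\<Sum>c\<leftarrow>cs. (if eval m c xs then 1 else 0 :: nat)) mod m \<in> A)"

fun wf_circ :: "nat \<Rightarrow> nat \<Rightarrow> circ \<Rightarrow> bool" where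
  "wf_circ m n (Var i) = (i < n)"
| "wf_circ m n (Cst b) = True"
| "wf_circ m n (Gate A cs) = (A \<subseteq> {..<m} \<and> (\<forall>c\<in>set cs. wf_circ m n c))"

definition CC_circuit :: "nat \<Rightarrow> nat \<Rightarrow> nat \<Rightarrow> circ \<Rightarrow> bool" where
  "CC_circuit h m n C \<longleftrightarrow> wf_circ m n C \<and> depth C = h"

text \<open>n-ary Boolean functions are functions on bool lists; only lists of length n matter.\<close>
definition computes :: "nat \<Rightarrow> nat \<Rightarrow> circ \<Rightarrow> (bool list \<Rightarrow> bool) \<Rightarrow> bool" where
  "computes m n C f \<longleftrightarrow> (\<forall>xs. length xs = n \<longrightarrow> eval m C xs = f xs)"

definition CC_computable :: "nat \<Rightarrow> nat \<Rightarrow> nat \<Rightarrow> (bool list \<Rightarrow> bool) \<Rightarrow> bool" where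
  "CC_computable h m n f \<longleftrightarrow> (\<exists>C. CC_circuit h m n C \<and> computes m n C f)"

definition AND_fun :: "nat \<Rightarrow> bool list \<Rightarrow> bool" where
  "AND_fun n xs \<longleftrightarrow> (\<forall>i<n. xs ! i)"

definition nonconstant :: "nat \<Rightarrow> (bool list \<Rightarrow> bool) \<Rightarrow> bool" where
  "nonconstant n f \<longleftrightarrow> (\<exists>xs ys. length xs = n \<and> length ys = n \<and> f xs \<noteq> f ys)"

definition balance :: "nat \<Rightarrow> (bool list \<Rightarrow> bool) \<Rightarrow> real" where
  "balance n f = 1 - \<bar>real (card {xs. length xs = n \<and> \<not> f xs}) - real (card {xs. length xs = n \<and> f xs})\<bar> / 2 ^ n"

definition omega :: "nat \<Rightarrow> nat" where
  "omega m = card (prime_factors m)"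

end

theory Submission
  imports Defs
begin

(* Let S be the smaller fibre of f, so that bal f = 2|S|/2^n; complementing the accepting set of
   the output gate yields a circuit of the same shape accepting exactly S. Splitting S
   coordinate by coordinate, every nonempty S of n-bit strings admits a restriction of the
   inputs to constants and literals over d fresh variables, with |S| >= 2^(n-d), under which
   membership in S becomes AND_d. Every literal, negated ones included, is a sum of wires
   modulo m, so the restricted circuit is again a CC^h[m]-circuit and computes AND_d. Hence
   d <= c and bal f >= 2^(1-d) >= 2^(1-c). *)

datatype literal = Const bool | Lit nat bool

fun lit_val :: "literal \<Rightarrow> bool list \<Rightarrow> bool" where
  "lit_val (Const b) ys = b"
| "lit_val (Lit j s) ys = (ys ! j = s)"

fun wf_lit :: "nat \<Rightarrow> literal \<Rightarrow> bool" where
  "wf_lit d (Const b) = True"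
| "wf_lit d (Lit j s) = (j < d)"

lemma wf_lit_mono: "d \<le> d' \<Longrightarrow> wf_lit d l \<Longrightarrow> wf_lit d' l"
  by (cases l) auto

definition restrict :: "(nat \<Rightarrow> literal) \<Rightarrow> nat \<Rightarrow> bool list \<Rightarrow> bool list" where
  "restrict L n ys = map (\<lambda>i. lit_val (L i) ys) [0..<n]"

lemma length_restrict [simp]: "length (restrict L n ys) = n"
  by (simp add: restrict_def)

lemma nth_restrict [simp]: "i < n \<Longrightarrow> restrict L n ys ! i = lit_val (L i) ys"
  by (simp add: restrict_def)

lemma restrict_Suc: "restrict (case_nat l L) (Suc n) ys = lit_val l ys # restrict L n ys"
  unfolding restrict_def by (simp only: map_upt_Suc nat.case)

lemma card_eq_sum_vimage_Cons:
  assumes "finite S" "[] \<notin> S"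
  shows "card S = card (Cons False -` S) + card (Cons True -` S)"
proof -
  have split: "S = Cons False ` (Cons False -` S) \<union> Cons True ` (Cons True -` S)"
  proof (intro equalityI subsetI)
    fix xs assume "xs \<in> S"
    with assms(2) obtain b ys where "xs = b # ys" by (cases xs) auto
    with \<open>xs \<in> S\<close> show "xs \<in> Cons False ` (Cons False -` S) \<union> Cons True ` (Cons True -` S)"
      by (cases b) auto
  qed auto
  have "finite (Cons b -` S)" for b
    using assms(1) by (rule finite_vimageI) simp
  then have "card S = card (Cons False ` (Cons False -` S)) + card (Cons True ` (Cons True -` S))"
    by (subst split, intro card_Un_disjoint) (auto simp: assms(1))
  moreover have "card (Cons b ` (Cons b -` S)) = card (Cons b -` S)" for b
    by (rule card_image) (simp add: inj_on_def)
  ultimately show ?thesis by presburger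
qed

text \<open>Induction on n, splitting S by the first coordinate. If one half of S is empty, that
  coordinate becomes the fresh variable number d, forced to be true; otherwise it is fixed to
  the constant whose half is the smaller one, which at most halves |S|.\<close>
lemma restriction_onto_AND:
  assumes "S \<noteq> {}" "\<forall>xs\<in>S. length xs = n"
  obtains d L where "d \<le> n" "2 ^ (n - d) \<le> card S" "\<forall>i<n. wf_lit d (L i)"
    "\<And>ys. d \<le> length ys \<Longrightarrow> restrict L n ys \<in> S \<longleftrightarrow> (\<forall>i<d. ys ! i)"
  using assms
proof (induction n arbitrary: S thesis)
  case 0
  then have "S = {[]}" by auto
  then show ?case by (intro "0.prems"(1)[of 0 "\<lambda>_. Const True"]) (auto simp: restrict_def)
next
  case (Suc n)
  have fin: "finite S"
    by (rule finite_subset[OF _ finite_lists_length_eq[OF finite_UNIV, of "Suc n"]])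
      (use Suc.prems(3) in auto)
  have card_S: "card S = card (Cons False -` S) + card (Cons True -` S)"
    using Suc.prems(3) by (intro card_eq_sum_vimage_Cons fin) fastforce
  have card_pos: "card S > 0"
    using fin Suc.prems(2) by (simp add: card_gt_0_iff)
  obtain b where b: "Cons b -` S \<noteq> {}"
    and b_cases: "Cons (\<not> b) -` S = {} \<or> 2 * card (Cons b -` S) \<le> card S"
  proof -
    consider "Cons False -` S = {}" | "Cons True -` S = {}"
      | "Cons False -` S \<noteq> {}" "Cons True -` S \<noteq> {}" by blast
    then show thesis
    proof cases
      case 1
      with card_S card_pos have "Cons True -` S \<noteq> {}" by auto
      with 1 show ?thesis by (intro that[of True]) simp_all
    next
      case 2
      with card_S card_pos have "Cons False -` S \<noteq> {}" by auto
      with 2 show ?thesis by (intro that[of False]) simp_all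
    next
      case 3
      then show ?thesis
        using card_S that[of False] that[of True]
        by (cases "card (Cons False -` S) \<le> card (Cons True -` S)") auto
    qed
  qed
  have len_b: "\<forall>xs\<in>Cons b -` S. length xs = n"
    using Suc.prems(3) by auto
  obtain d L where d: "d \<le> n" "2 ^ (n - d) \<le> card (Cons b -` S)" "\<forall>i<n. wf_lit d (L i)"
    and L: "\<And>ys. d \<le> length ys \<Longrightarrow> restrict L n ys \<in> Cons b -` S \<longleftrightarrow> (\<forall>i<d. ys ! i)"
    by (rule Suc.IH[OF _ b len_b]) (rule that)
  from b_cases show ?case
  proof
    assume empty: "Cons (\<not> b) -` S = {}"
    show ?case
    proof (rule Suc.prems(1)[of "Suc d" "case_nat (Lit d b) L"])
      have "card (Cons b -` S) \<le> card S"
        using card_S by (cases b) auto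
      then show "2 ^ (Suc n - Suc d) \<le> card S" using d(2) by simp
      show "\<forall>i<Suc n. wf_lit (Suc d) (case_nat (Lit d b) L i)"
        using d(3) by (auto simp: less_Suc_eq_0_disj intro: wf_lit_mono[of d])
      fix ys :: "bool list" assume ys: "Suc d \<le> length ys"
      have "restrict (case_nat (Lit d b) L) (Suc n) ys \<in> S \<longleftrightarrow> ys ! d \<and> restrict L n ys \<in> Cons b -` S"
        using empty by (cases "ys ! d") (auto simp: restrict_Suc)
      also have "\<dots> \<longleftrightarrow> (\<forall>i<Suc d. ys ! i)" using L ys by (auto simp: less_Suc_eq)
      finally show "restrict (case_nat (Lit d b) L) (Suc n) ys \<in> S \<longleftrightarrow> (\<forall>i<Suc d. ys ! i)" .
    qed (use d(1) in simp)
  next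
    assume half: "2 * card (Cons b -` S) \<le> card S"
    show ?case
    proof (rule Suc.prems(1)[of d "case_nat (Const b) L"])
      show "2 ^ (Suc n - d) \<le> card S" using d(1,2) half by (simp add: Suc_diff_le)
      show "\<forall>i<Suc n. wf_lit d (case_nat (Const b) L i)"
        using d(3) by (auto simp: less_Suc_eq_0_disj)
      show "restrict (case_nat (Const b) L) (Suc n) ys \<in> S \<longleftrightarrow> (\<forall>i<d. ys ! i)" if "d \<le> length ys" for ys
        using L[OF that] by (simp add: restrict_Suc)
    qed (use d(1) in simp)
  qed
qed

definition ones :: "nat \<Rightarrow> circ list \<Rightarrow> bool list \<Rightarrow> nat" where
  "ones m cs xs = (\<Sum>c\<leftarrow>cs. if eval m c xs then 1 else 0)"

lemma ones_concat: "ones m (concat css) xs = (\<Sum>cs\<leftarrow>css. ones m cs xs)"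
  by (induction css) (simp_all add: ones_def)

lemma ones_singleton [simp]: "ones m [c] xs = of_bool (eval m c xs)"
  by (simp add: ones_def)

lemma sum_list_mod_cong:
  fixes f g :: "'a \<Rightarrow> nat"
  assumes "\<And>x. x \<in> set xs \<Longrightarrow> f x mod m = g x mod m"
  shows "(\<Sum>x\<leftarrow>xs. f x) mod m = (\<Sum>x\<leftarrow>xs. g x) mod m"
  using assms by (induction xs) (auto intro: mod_add_cong)

lemma eval_Gate_concat_cong:
  assumes "\<And>c. c \<in> set cs \<Longrightarrow> ones m (ds c) ys mod m = of_bool (eval m c xs) mod m"
  shows "eval m (Gate A (concat (map ds cs))) ys = eval m (Gate A cs) xs"
proof -
  have "ones m (concat (map ds cs)) ys mod m = (\<Sum>c\<leftarrow>cs. of_bool (eval m c xs)) mod m"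
    unfolding ones_concat map_map o_def by (rule sum_list_mod_cong) (rule assms)
  then show ?thesis by (simp add: ones_def of_bool_def)
qed

fun subst_circ :: "(nat \<Rightarrow> circ list) \<Rightarrow> circ \<Rightarrow> circ list" where
  "subst_circ \<sigma> (Var i) = \<sigma> i"
| "subst_circ \<sigma> (Cst b) = [Cst b]"
| "subst_circ \<sigma> (Gate A cs) = [Gate A (concat (map (subst_circ \<sigma>) cs))]"

lemma ones_subst_circ:
  assumes "\<And>i. i < n \<Longrightarrow> ones m (\<sigma> i) ys mod m = of_bool (xs ! i) mod m"
  shows "wf_circ m n c \<Longrightarrow> ones m (subst_circ \<sigma> c) ys mod m = of_bool (eval m c xs) mod m"
proof (induction c)
  case (Gate A cs)
  then have "eval m (Gate A (concat (map (subst_circ \<sigma>) cs))) ys = eval m (Gate A cs) xs"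
    by (intro eval_Gate_concat_cong) auto
  then show ?case by simp
qed (use assms in simp_all)

lemma wf_subst_circ:
  assumes "\<And>i. i < n \<Longrightarrow> \<forall>c\<in>set (\<sigma> i). wf_circ m d c"
  shows "wf_circ m n c \<Longrightarrow> \<forall>c'\<in>set (subst_circ \<sigma> c). wf_circ m d c'"
  by (induction c) (use assms in auto)

lemma foldr_max_eq_Max: "foldr max xs 0 = Max (insert 0 (set xs))" for xs :: "nat list"
  by (induction xs) (simp_all add: insert_commute)

lemma depth_subst_circ:
  assumes "\<And>i. \<sigma> i \<noteq> [] \<and> (\<forall>c\<in>set (\<sigma> i). depth c = 0)"
  shows "subst_circ \<sigma> c \<noteq> [] \<and> (\<forall>c'\<in>set (subst_circ \<sigma> c). depth c' = depth c)"
proof (induction c)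
  case (Gate A cs)
  have "depth ` set (subst_circ \<sigma> c) = {depth c}" if "c \<in> set cs" for c
    using Gate.IH[OF that] by (cases "subst_circ \<sigma> c") auto
  then have "depth ` (\<Union>c\<in>set cs. set (subst_circ \<sigma> c)) = depth ` set cs"
    by (simp add: image_UN) blast
  then show ?case by (simp add: foldr_max_eq_Max)
qed (use assms in simp_all)

text \<open>A negated literal is one constant-true wire plus m - 1 copies of the variable, since
  1 + (m - 1) x \<equiv> 1 - x (mod m).\<close>
fun lit_wires :: "nat \<Rightarrow> literal \<Rightarrow> circ list" where
  "lit_wires m (Const b) = [Cst b]"
| "lit_wires m (Lit j s) = (if s then [Var j] else Cst True # replicate (m - 1) (Var j))"

lemma ones_lit_wires:
  assumes "0 < m"
  shows "ones m (lit_wires m l) ys mod m = of_bool (lit_val l ys) mod m"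
proof (cases l)
  case (Lit j s)
  then show ?thesis
    using assms by (cases s) (auto simp: ones_def sum_list_replicate)
qed simp

lemma wf_lit_wires: "wf_lit d l \<Longrightarrow> \<forall>c\<in>set (lit_wires m l). wf_circ m d c"
  by (cases l) auto

lemma depth_lit_wires: "lit_wires m l \<noteq> [] \<and> (\<forall>c\<in>set (lit_wires m l). depth c = 0)"
  by (cases l) auto

lemma CC_computable_cong:
  "CC_computable h m n f \<Longrightarrow> (\<And>xs. length xs = n \<Longrightarrow> f xs = g xs) \<Longrightarrow> CC_computable h m n g"
  by (auto simp: CC_computable_def computes_def)

lemma CC_circuit_Gate:
  assumes "0 < h" "CC_circuit h m n C"
  obtains A cs where "C = Gate A cs"
  using assms by (cases C) (auto simp: CC_circuit_def)

lemma CC_computable_Not: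
  assumes "0 < h" "0 < m" "CC_computable h m n f"
  shows "CC_computable h m n (\<lambda>xs. \<not> f xs)"
proof -
  obtain C where C: "CC_circuit h m n C" "computes m n C f"
    using assms(3) by (auto simp: CC_computable_def)
  then obtain A cs where [simp]: "C = Gate A cs"
    using assms(1) by (auto elim: CC_circuit_Gate)
  have "CC_circuit h m n (Gate ({..<m} - A) cs)"
    using C(1) by (simp add: CC_circuit_def)
  moreover have "computes m n (Gate ({..<m} - A) cs) (\<lambda>xs. \<not> f xs)"
    using C(2) assms(2) by (simp add: computes_def)
  ultimately show ?thesis by (auto simp: CC_computable_def)
qed

lemma CC_computable_fibre:
  assumes "0 < h" "0 < m" "CC_computable h m n f"
  shows "CC_computable h m n (\<lambda>xs. f xs = b)"
  using CC_computable_Not[OF assms] assms(3) by (cases b) simp_all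

lemma CC_computable_restrict:
  assumes "0 < h" "0 < m" "CC_computable h m n f" "\<forall>i<n. wf_lit d (L i)"
  shows "CC_computable h m d (\<lambda>ys. f (restrict L n ys))"
proof -
  obtain C where C: "CC_circuit h m n C" "computes m n C f"
    using assms(3) by (auto simp: CC_computable_def)
  then obtain A cs where C_Gate: "C = Gate A cs"
    using assms(1) by (auto elim: CC_circuit_Gate)
  define \<sigma> where "\<sigma> i = lit_wires m (L i)" for i
  define C' where "C' = Gate A (concat (map (subst_circ \<sigma>) cs))"
  have "subst_circ \<sigma> C = [C']"
    by (simp add: C_Gate C'_def)
  moreover have "wf_circ m n C" "depth C = h"
    using C(1) by (simp_all add: CC_circuit_def)
  moreover have "\<forall>c\<in>set (\<sigma> i). wf_circ m d c" if "i < n" for i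
    using wf_lit_wires assms(4) that unfolding \<sigma>_def by blast
  ultimately have "wf_circ m d C'" "depth C' = h"
    using wf_subst_circ[of n \<sigma> m d C] depth_subst_circ[of \<sigma> C]
    by (auto simp: \<sigma>_def depth_lit_wires)
  moreover have "eval m C' ys = f (restrict L n ys)" if "length ys = d" for ys
  proof -
    have "eval m C' ys = eval m C (restrict L n ys)"
      unfolding C'_def C_Gate
    proof (rule eval_Gate_concat_cong, rule ones_subst_circ)
      show "ones m (\<sigma> i) ys mod m = of_bool (restrict L n ys ! i) mod m" if "i < n" for i
        using that ones_lit_wires[OF assms(2)] by (simp add: \<sigma>_def)
    qed (use \<open>wf_circ m n C\<close> C_Gate in auto)
    then show ?thesis using C(2) by (simp add: computes_def)
  qed
  ultimately show ?thesis
    by (auto simp: CC_computable_def CC_circuit_def computes_def)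
qed

lemma balance_eq_fibre:
  obtains b where "balance n f = 2 * real (card {xs. length xs = n \<and> f xs = b}) / 2 ^ n"
proof -
  let ?T = "{xs. length xs = n \<and> f xs}" and ?F = "{xs. length xs = n \<and> \<not> f xs}"
  have lists: "finite {xs :: bool list. length xs = n}"
    using finite_lists_length_eq[of "UNIV :: bool set" n] by simp
  have fin: "finite ?T" "finite ?F"
    by (rule finite_subset[OF _ lists], blast)+
  have "2 ^ n = card {xs :: bool list. length xs = n}"
    using card_lists_length_eq[of "UNIV :: bool set" n] by simp
  also have "\<dots> = card (?T \<union> ?F)"
    by (rule arg_cong[where f = card]) blast
  also have "\<dots> = card ?T + card ?F"
    by (rule card_Un_disjoint[OF fin]) blast
  finally have "card ?T + card ?F = (2 :: nat) ^ n" ..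
  then have sum: "real (card ?T) + real (card ?F) = 2 ^ n"
    by (simp flip: of_nat_add)
  show ?thesis
  proof (cases "card ?T \<le> card ?F")
    case True
    then have "\<bar>real (card ?F) - real (card ?T)\<bar> = 2 ^ n - 2 * real (card ?T)"
      using sum by linarith
    then have "balance n f = 2 * real (card ?T) / 2 ^ n"
      by (simp add: balance_def diff_divide_distrib)
    then show ?thesis by (intro that[of True]) simp
  next
    case False
    then have "\<bar>real (card ?F) - real (card ?T)\<bar> = 2 ^ n - 2 * real (card ?F)"
      using sum by linarith
    then have "balance n f = 2 * real (card ?F) / 2 ^ n"
      by (simp add: balance_def diff_divide_distrib)
    then show ?thesis by (intro that[of False]) simp
  qed
qed

lemma two_powr_one_minus_le:
  fixes c d n k :: nat
  assumes "d \<le> c" "d \<le> n" "2 ^ (n - d) \<le> k"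
  shows "2 powr (1 - real c) \<le> 2 * real k / 2 ^ n"
proof -
  have "2 powr (1 - real c) \<le> 2 powr (1 - real d)"
    using assms(1) by simp
  also have "\<dots> = 2 * 2 ^ (n - d) / 2 ^ n"
    using assms(2) by (simp add: powr_diff powr_realpow[symmetric] of_nat_diff powr_add)
  also have "\<dots> \<le> 2 * real k / 2 ^ n"
    using assms(3) by (simp add: divide_right_mono flip: of_nat_le_iff)
  finally show ?thesis .
qed

theorem corollary2p4:
  fixes h m c :: nat
  assumes "h > 0" and "m > 0" and "h = 1 \<or> omega m = 1" and "c > 0"
    and "\<forall>n>c. \<not> CC_computable h m n (AND_fun n)"
  shows "\<forall>n f. CC_computable h m n f \<and> nonconstant n f \<longrightarrow> balance n f \<ge> 2 powr (1 - real c)"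
proof (intro allI impI, elim conjE)
  fix n f
  assume f: "CC_computable h m n f" and "nonconstant n f"
  obtain b where bal: "balance n f = 2 * real (card {xs. length xs = n \<and> f xs = b}) / 2 ^ n"
    by (rule balance_eq_fibre)
  define S where "S = {xs. length xs = n \<and> f xs = b}"
  have "S \<noteq> {}"
    using \<open>nonconstant n f\<close> by (auto simp: S_def nonconstant_def)
  moreover have "\<forall>xs\<in>S. length xs = n"
    by (simp add: S_def)
  ultimately obtain d L where d: "d \<le> n" "2 ^ (n - d) \<le> card S" and L: "\<forall>i<n. wf_lit d (L i)"
    and AND: "\<And>ys. d \<le> length ys \<Longrightarrow> restrict L n ys \<in> S \<longleftrightarrow> (\<forall>i<d. ys ! i)"
    by (rule restriction_onto_AND) (rule that)
  have "CC_computable h m d (\<lambda>ys. f (restrict L n ys) = b)"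
    using CC_computable_restrict[OF assms(1,2) CC_computable_fibre[OF assms(1,2) f] L] .
  then have "CC_computable h m d (AND_fun d)"
    by (rule CC_computable_cong) (use AND in \<open>simp add: S_def AND_fun_def\<close>)
  with assms(5) have "d \<le> c"
    by (meson not_le)
  then show "2 powr (1 - real c) \<le> balance n f"
    unfolding bal S_def[symmetric] using d by (rule two_powr_one_minus_le)
qed

end
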